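(* For every sufficiently large $n$, there exists a 3-uniform hypergraph $T$ with $10n$ vertices and $120n$ hyperedges, together with a set $Z\subseteq V(T)$ of $2n$ vertices, such that for any set $Z'\subseteq Z$ of $n$ vertices, the hypergraph obtained from $T$ by deleting the vertices of $Z'$ has a perfect matching.
   Context: A perfect matching of a hypergraph is a set of pairwise disjoint hyperedges covering all its vertices; deleting a vertex deletes it together with all hyperedges containing it. *)

theory Defs
  imports Main
begin

definition uniform_hypergraph :: "nat \<Rightarrow> 'a set \<Rightarrow> 'a set set \<Rightarrow> bool" where
  "uniform_hypergraph k V E \<longleftrightarrow> finite V \<and> (\<forall>e\<in>E. e \<subseteq> V \<and> card e = k)"

definition del_vertices_V :: "'a set \<Rightarrow> 'a set \<Rightarrow> 'a set" where
  "del_vertices_V V Z = V - Z"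

definition del_vertices_E :: "'a set set \<Rightarrow> 'a set \<Rightarrow> 'a set set" where
  "del_vertices_E E Z = {e \<in> E. e \<inter> Z = {}}"

definition perfect_matching :: "'a set \<Rightarrow> 'a set set \<Rightarrow> 'a set set \<Rightarrow> bool" where
  "perfect_matching V E M \<longleftrightarrow> M \<subseteq> E \<and>
     (\<forall>e1\<in>M. \<forall>e2\<in>M. e1 \<noteq> e2 \<longrightarrow> e1 \<inter> e2 = {}) \<and> \<Union>M = V"

definition has_perfect_matching :: "'a set \<Rightarrow> 'a set set \<Rightarrow> bool" where
  "has_perfect_matching V E \<longleftrightarrow> (\<exists>M. perfect_matching V E M)"

end

theory Submission
  imports Defs Complex_Main
begin

text \<open>Take the vertices 0, ..., 10n-1, let Z be the multiples of 5 among them, and let the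
hyperedges be all triples lying in a window of four consecutive integers, padded by arbitrary
triples to 120n edges. Any four consecutive integers contain at most one multiple of 5, so after
deleting vertices of Z every element is followed, within distance three, by two further surviving
vertices. Cutting the sorted list of the 9n survivors into consecutive triples therefore yields
window triples, i.e. a perfect matching.\<close>

definition rank :: "'a::linorder set \<Rightarrow> 'a \<Rightarrow> nat" where
  "rank R u = card {w \<in> R. w < u}"

lemma rank_strict_mono:
  assumes "finite R" "u \<in> R" "u < w"
  shows "rank R u < rank R w"
  unfolding rank_def by (rule psubset_card_mono) (use assms in auto)

lemma rank_add:
  assumes "finite R" "u < w"
  shows "rank R w = rank R u + card (R \<inter> {u..<w})"
proof -
  have "{x \<in> R. x < w} = {x \<in> R. x < u} \<union> (R \<inter> {u..<w})" using assms by auto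
  moreover have "{x \<in> R. x < u} \<inter> (R \<inter> {u..<w}) = {}" by auto
  ultimately show ?thesis unfolding rank_def using assms by (simp add: card_Un_disjoint)
qed

lemma bij_betw_rank:
  assumes "finite R"
  shows "bij_betw (rank R) R {..<card R}"
proof -
  have inj: "inj_on (rank R) R"
    by (rule inj_onI) (metis assms rank_strict_mono less_irrefl linorder_neqE)
  have "rank R u < card R" if "u \<in> R" for u
    unfolding rank_def by (rule psubset_card_mono) (use assms that in auto)
  then have "rank R ` R \<subseteq> {..<card R}" by auto
  moreover have "card (rank R ` R) = card {..<card R}" using card_image[OF inj] by simp
  ultimately show ?thesis using inj by (simp add: bij_betw_def card_subset_eq)
qed

definition window_triples :: "nat set \<Rightarrow> nat set set" where
  "window_triples V = {e. e \<subseteq> V \<and> card e = 3 \<and> (\<exists>i. e \<subseteq> {i..i+3})}"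

lemma card_window_triples_le: "card (window_triples {..<N}) \<le> 4 * N"
proof -
  have "window_triples {..<N} \<subseteq> (\<Union>i<N. {e. e \<subseteq> {i..i+3} \<and> card e = 3})"
  proof
    fix e assume "e \<in> window_triples {..<N}"
    then obtain i where e: "e \<subseteq> {..<N}" "card e = 3" "e \<subseteq> {i..i+3}"
      unfolding window_triples_def by auto
    then obtain x where "x \<in> e" by fastforce
    with e have "i < N" by fastforce
    with e show "e \<in> (\<Union>i<N. {e. e \<subseteq> {i..i+3} \<and> card e = 3})" by auto
  qed
  then have "card (window_triples {..<N}) \<le> card (\<Union>i<N. {e. e \<subseteq> {i..i+3} \<and> card e = 3})"
    by (rule card_mono[rotated]) auto
  also have "\<dots> \<le> (\<Sum>i<N. card {e. e \<subseteq> {i..i+3} \<and> card e = 3})"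
    by (rule card_UN_le) auto
  also have "\<dots> = (\<Sum>i<N. 4)"
    using n_subsets[of "{_..Suc (Suc (Suc _))}" 3] by (simp add: numeral_eq_Suc)
  finally show ?thesis by simp
qed

lemma has_perfect_matching_mono:
  assumes "has_perfect_matching V E" "E \<subseteq> E'"
  shows "has_perfect_matching V E'"
proof -
  obtain M where "perfect_matching V E M" using assms(1) unfolding has_perfect_matching_def ..
  then have "perfect_matching V E' M" using assms(2) unfolding perfect_matching_def by blast
  then show ?thesis unfolding has_perfect_matching_def ..
qed

text \<open>The matching consists of the elements of ranks 3j, 3j+1, 3j+2; the density hypothesis
keeps each such triple within distance three.\<close>

lemma has_perfect_matching_window_triples:
  assumes fin: "finite R" and card: "card R = 3 * m"
    and dense: "\<And>u w. u \<in> R \<Longrightarrow> w \<in> R \<Longrightarrow> u + 4 \<le> w \<Longrightarrow> 3 \<le> card (R \<inter> {u..<w})"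
  shows "has_perfect_matching R (window_triples R)"
proof -
  define C where "C j = {u \<in> R. rank R u div 3 = j}" for j
  have bij: "bij_betw (rank R) R {..<3 * m}" using bij_betw_rank[OF fin] card by simp
  have rank_C: "rank R ` C j = {3*j..<3*j+3}" if "j < m" for j
  proof -
    have "rank R ` C j = {k \<in> rank R ` R. k div 3 = j}" unfolding C_def by auto
    also have "\<dots> = {3*j..<3*j+3}" using bij that by (auto simp: bij_betw_def)
    finally show ?thesis .
  qed
  have "C j \<in> window_triples R" if j: "j < m" for j
  proof -
    have "inj_on (rank R) (C j)"
      using bij_betw_imp_inj_on[OF bij] by (rule inj_on_subset) (auto simp: C_def)
    then have card_C: "card (C j) = 3" using card_image rank_C[OF j] by fastforce
    obtain x where x: "x \<in> R" "rank R x = 3 * j"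
    proof -
      have "3 * j \<in> rank R ` C j" using rank_C[OF j] by simp
      then show ?thesis using that unfolding C_def by force
    qed
    have "C j \<subseteq> {x..x+3}"
    proof
      fix u assume "u \<in> C j"
      then have u: "u \<in> R" "rank R u div 3 = j" unfolding C_def by auto
      have "\<not> u < x" using rank_strict_mono[OF fin u(1)] x u(2) by fastforce
      moreover have "\<not> x + 4 \<le> u"
      proof
        assume "x + 4 \<le> u"
        then have "rank R x + 3 \<le> rank R u"
          using rank_add[OF fin, of x u] dense[OF x(1) u(1)] by simp
        then show False using x u(2) by auto
      qed
      ultimately show "u \<in> {x..x+3}" by auto
    qed
    then show ?thesis unfolding window_triples_def using card_C by (auto simp: C_def)
  qed
  moreover have "rank R u div 3 < m" if "u \<in> R" for u
  proof -
    have "rank R u < 3 * m" using bij_betw_apply[OF bij that] by simp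
    then show ?thesis by linarith
  qed
  then have "\<Union> (C ` {..<m}) = R" by (auto simp: C_def)
  ultimately have "perfect_matching R (window_triples R) (C ` {..<m})"
    unfolding perfect_matching_def C_def by auto
  then show ?thesis unfolding has_perfect_matching_def by blast
qed

lemma card_multiples_in_interval_le_1:
  "card ({x::nat. k dvd x} \<inter> {u..<u+k}) \<le> 1"
proof -
  have "a \<le> b" if ab: "a \<in> {x. k dvd x} \<inter> {u..<u+k}" "b \<in> {x. k dvd x} \<inter> {u..<u+k}" for a b
  proof -
    obtain i j where ij: "a = k * i" "b = k * j" using ab by (auto elim!: dvdE)
    have "\<not> j < i"
    proof
      assume "j < i"
      then have "k * Suc j \<le> k * i" by (intro mult_le_mono2) simp
      then show False using ab ij by auto
    qed
    then show ?thesis using ij by simp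
  qed
  then show ?thesis by (simp add: card_le_Suc0_iff_eq antisym)
qed

lemma card_interval_diff_multiples_of_5:
  fixes Z :: "nat set"
  assumes Z: "Z \<subseteq> {x. 5 dvd x}" and w: "w \<in> {..<N} - Z" and uw: "u + 4 \<le> w"
  shows "3 \<le> card (({..<N} - Z) \<inter> {u..<w})"
proof -
  have "card ({u..<u+4} \<inter> Z) \<le> card ({x. 5 dvd x} \<inter> {u..<u+5})"
    using Z by (intro card_mono) auto
  also have "\<dots> \<le> 1" by (rule card_multiples_in_interval_le_1)
  finally have "3 \<le> card ({u..<u+4} - Z)" by (simp add: card_Diff_subset_Int)
  also have "\<dots> \<le> card (({..<N} - Z) \<inter> {u..<w})"
    using w uw by (intro card_mono) auto
  finally show ?thesis .
qed

lemma obtain_superset_with_card: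
  assumes "finite B" "A \<subseteq> B" "card A \<le> n" "n \<le> card B"
  obtains C where "A \<subseteq> C" "C \<subseteq> B" "card C = n"
proof -
  have fin_A: "finite A" using assms finite_subset by blast
  have "n - card A \<le> card (B - A)" using assms fin_A by (simp add: card_Diff_subset)
  then obtain F where F: "F \<subseteq> B - A" "card F = n - card A" "finite F"
    by (rule obtain_subset_with_card_n)
  moreover have "A \<inter> F = {}" using F by auto
  ultimately have "card (A \<union> F) = n" using fin_A assms(3) by (simp add: card_Un_disjoint)
  then show ?thesis by (rule that[rotated -1]) (use F assms in auto)
qed

lemma linear_le_binomial_3:
  assumes "(n::nat) \<ge> 2" shows "120 * n \<le> (10 * n) choose 3"
proof -
  have "real n * 4 \<le> real n * (real n * real n)"
    using assms mult_mono[of 2 "real n" 2 "real n"] by (intro mult_left_mono) auto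
  then have "real (120 * n) \<le> (real (10 * n) / real 3) ^ 3"
    by (simp add: power3_eq_cube field_simps)
  also have "\<dots> \<le> real ((10 * n) choose 3)"
    by (rule binomial_ge_n_over_k_pow_k) (use assms in auto)
  finally show ?thesis by linarith
qed

theorem lemma5p2:
  shows "\<exists>n0::nat. \<forall>n\<ge>n0. \<exists>(V::nat set) (E::nat set set) Z.
     uniform_hypergraph 3 V E \<and> card V = 10 * n \<and> card E = 120 * n \<and>
     Z \<subseteq> V \<and> card Z = 2 * n \<and>
     (\<forall>Z'. Z' \<subseteq> Z \<and> card Z' = n \<longrightarrow>
        has_perfect_matching (del_vertices_V V Z') (del_vertices_E E Z'))"
proof (rule exI[of _ 2], intro allI impI)
  fix n :: nat assume n: "2 \<le> n"
  define V where "V = {..<10 * n}"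
  define Z where "Z = (\<lambda>k. 5 * k) ` {..<2 * n}"
  define T where "T = {e. e \<subseteq> V \<and> card e = 3}"
  have T: "finite T" "window_triples V \<subseteq> T"
    unfolding window_triples_def T_def V_def by simp_all blast
  have "card (window_triples V) \<le> 120 * n"
    using card_window_triples_le[of "10 * n"] by (simp add: V_def)
  moreover have "120 * n \<le> card T"
    using linear_le_binomial_3[OF n] by (simp add: T_def V_def n_subsets)
  ultimately obtain E where E: "window_triples V \<subseteq> E" "E \<subseteq> T" "card E = 120 * n"
    by (rule obtain_superset_with_card[OF T])
  have ZV: "Z \<subseteq> V" by (auto simp: Z_def V_def)
  have card_Z: "card Z = 2 * n" unfolding Z_def by (simp add: card_image inj_on_def)
  have match: "has_perfect_matching (del_vertices_V V Z') (del_vertices_E E Z')"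
    if Z': "Z' \<subseteq> Z" "card Z' = n" for Z'
  proof -
    have card_R: "card (V - Z') = 3 * (3 * n)"
      using Z' ZV by (simp add: card_Diff_subset finite_subset V_def)
    have "Z' \<subseteq> {x. 5 dvd x}" using Z' by (auto simp: Z_def)
    then have dense: "3 \<le> card ((V - Z') \<inter> {u..<w})"
      if "u \<in> V - Z'" "w \<in> V - Z'" "u + 4 \<le> w" for u w
      using card_interval_diff_multiples_of_5 that unfolding V_def by blast
    have "has_perfect_matching (V - Z') (window_triples (V - Z'))"
      by (rule has_perfect_matching_window_triples[OF _ card_R dense]) (simp add: V_def)
    moreover have "window_triples (V - Z') \<subseteq> del_vertices_E E Z'"
      using E(1) by (auto simp: window_triples_def del_vertices_E_def)
    ultimately show ?thesis unfolding del_vertices_V_def by (rule has_perfect_matching_mono)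
  qed
  have card_V: "card V = 10 * n" by (simp add: V_def)
  have uniform: "uniform_hypergraph 3 V E"
    using E(2) by (auto simp: uniform_hypergraph_def T_def V_def)
  show "\<exists>(V::nat set) E Z. uniform_hypergraph 3 V E \<and> card V = 10 * n \<and> card E = 120 * n \<and>
     Z \<subseteq> V \<and> card Z = 2 * n \<and> (\<forall>Z'. Z' \<subseteq> Z \<and> card Z' = n \<longrightarrow>
        has_perfect_matching (del_vertices_V V Z') (del_vertices_E E Z'))"
    using card_V uniform E(3) ZV card_Z match by blast
qed

end
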